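(* Let $h\in\mathbb{N}$, $h'\in[h+1]$, $\ell\in\mathbb{N}$ and let $G$ be a graph. Let $T=t_1\dots t_{(h+1)\ell+h'-1}$ be the $h$-th power of a path in $G$ (each vertex adjacent to the preceding $h$ vertices), and let $W$ be a set of vertices disjoint from $T$. Let $Q_1:=\{t_1,\dots,t_{h+1}\}$, $Q_i:=\{t_{(h+1)(i-2)+1},\dots,t_{(h+1)i}\}$ for $1<i\leq\ell$, and $Q_{\ell+1}:=\{t_{(h+1)\ell-h},\dots,t_{(h+1)\ell+h'-1}\}$. If there is a permutation $\sigma$ of $[\ell+1]$ such that for each $i\in[\ell+1]$ the vertices of $Q_{\sigma(i)}$ have at least $i$ common neighbours in $W$, then there are distinct $q_1,\dots,q_{\ell+1}\in W$ such that $(q_1t_1\dots t_{h+1})(q_2t_{h+2}\dots t_{2(h+1)})\dots(q_\ell t_{(h+1)\ell-h}\dots t_{(h+1)\ell})(q_{\ell+1}t_{(h+1)\ell+1}\dots t_{(h+1)\ell+h'-1})$ is (in this order) the $(h+1)$-th power of a path in $G$, using every vertex of $T$. If instead $T=t_1\dots t_{(h+1)\ell}$ is the $h$-th power of a cycle in $G$ and we set $Q_1:=\{t_{(h+1)\ell-h},\dots,t_{(h+1)\ell},t_1,\dots,t_{h+1}\}$, $Q_i:=\{t_{(h+1)(i-2)+1},\dots,t_{(h+1)i}\}$ for $1<i\leq\ell$, and there is a permutation $\sigma$ of $[\ell]$ such that for each $i\in[\ell]$ the vertices of $Q_{\sigma(i)}$ have at least $i$ common neighbours in $W$, then $G$ contains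 the $(h+1)$-th power of a cycle $C^{h+1}_{(h+2)\ell}$ (obtained by inserting distinct vertices $q_1,\dots,q_\ell\in W$ before each block $t_{(h+1)(i-1)+1}\dots t_{(h+1)i}$).
   Context: The $h$-th power of a path (cycle) $v_1\dots v_s$ is the graph on these vertices in which $v_i,v_j$ are adjacent whenever their distance along the path (cycle) is at most $h$. $C^{h+1}_{s}$ denotes the $(h+1)$-th power of a cycle on $s$ vertices. *)

theory Defs
  imports Main
begin

definition simple_graph :: "('a \<Rightarrow> 'a \<Rightarrow> bool) \<Rightarrow> bool" where
  "simple_graph E \<longleftrightarrow> (\<forall>u v. E u v \<longrightarrow> E v u) \<and> (\<forall>v. \<not> E v v)"

definition path_power :: "('a \<Rightarrow> 'a \<Rightarrow> bool) \<Rightarrow> nat \<Rightarrow> 'a list \<Rightarrow> bool" where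
  "path_power E h xs \<longleftrightarrow> distinct xs \<and>
     (\<forall>i j. i < j \<and> j < length xs \<and> j - i \<le> h \<longrightarrow> E (xs ! i) (xs ! j))"

definition cycle_power :: "('a \<Rightarrow> 'a \<Rightarrow> bool) \<Rightarrow> nat \<Rightarrow> 'a list \<Rightarrow> bool" where
  "cycle_power E h xs \<longleftrightarrow> distinct xs \<and>
     (\<forall>i j. i < j \<and> j < length xs \<and> min (j - i) (length xs - (j - i)) \<le> h
        \<longrightarrow> E (xs ! i) (xs ! j))"

text \<open>Vertices t_a, ..., t_b of a list t (1-indexed).\<close>
definition seg :: "'a list \<Rightarrow> nat \<Rightarrow> nat \<Rightarrow> 'a set" where
  "seg t a b = {t ! (k - 1) | k. a \<le> k \<and> k \<le> b}"

definition common_nbrs :: "('a \<Rightarrow> 'a \<Rightarrow> bool) \<Rightarrow> 'a set \<Rightarrow> 'a set \<Rightarrow> 'a set" where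
  "common_nbrs E W Q = {w \<in> W. \<forall>v \<in> Q. E v w}"

definition Qpath :: "nat \<Rightarrow> nat \<Rightarrow> nat \<Rightarrow> 'a list \<Rightarrow> nat \<Rightarrow> 'a set" where
  "Qpath h h' l t i =
     (if i = 1 then seg t 1 (h + 1)
      else if i \<le> l then seg t ((h + 1) * (i - 2) + 1) ((h + 1) * i)
      else seg t ((h + 1) * l - h) ((h + 1) * l + h' - 1))"

definition Qcyc :: "nat \<Rightarrow> nat \<Rightarrow> 'a list \<Rightarrow> nat \<Rightarrow> 'a set" where
  "Qcyc h l t i =
     (if i = 1 then seg t ((h + 1) * l - h) ((h + 1) * l) \<union> seg t 1 (h + 1)
      else seg t ((h + 1) * (i - 2) + 1) ((h + 1) * i))"

text \<open>Block i (0-indexed) of length h+1: t_{(h+1)i+1} ... t_{(h+1)(i+1)}.\<close>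
definition block :: "nat \<Rightarrow> 'a list \<Rightarrow> nat \<Rightarrow> 'a list" where
  "block h t i = take (h + 1) (drop ((h + 1) * i) t)"

end

theory Submission
  imports Defs
begin

(* The inserted vertices are chosen greedily: taking the sets Q_sigma(1), Q_sigma(2), ... in
   turn, the i-th of them has at least i common neighbours in W, at most i - 1 of which are
   already used.  In the new sequence the vertex q_k put in front of block k of T is within
   distance h + 1 exactly of vertices of blocks k - 1 and k, i.e. of Q_k, so it is adjacent to
   all of them.  Two vertices of T that are at distance at most h + 1 in the new sequence were at
   distance at most h in T, since a new vertex separates them whenever they lie in different
   blocks.  For the cycle, Q_1 also contains the last block, which takes care of the pairs that
   wrap around. *)

section \<open>Distinct representatives\<close>

lemma inj_choice_card_ge:
  assumes "\<forall>i\<in>{1..n}. i \<le> card (B i)"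
  shows "\<exists>g. inj_on g {1..n} \<and> (\<forall>i\<in>{1..n}. g i \<in> B i)"
  using assms
proof (induction n)
  case 0
  then show ?case
    by simp
next
  case (Suc n)
  then obtain g where g: "inj_on g {1..n}" "\<forall>i\<in>{1..n}. g i \<in> B i"
    by auto
  have "card (g ` {1..n}) \<le> n"
    using card_image_le[of "{1..n}" g] by simp
  moreover have "Suc n \<le> card (B (Suc n))"
    using Suc.prems by simp
  ultimately have "\<not> B (Suc n) \<subseteq> g ` {1..n}"
    using card_mono[of "g ` {1..n}" "B (Suc n)"] by auto
  then obtain x where x: "x \<in> B (Suc n)" "x \<notin> g ` {1..n}"
    by blast
  have "Suc n \<notin> {1..n}" "{1..Suc n} = insert (Suc n) {1..n}"
    by auto
  then have "inj_on (g(Suc n := x)) {1..Suc n}"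
    using g(1) x(2) by (simp add: inj_on_fun_updI)
  moreover have "\<forall>i\<in>{1..Suc n}. (g(Suc n := x)) i \<in> B i"
    using g(2) x(1) by simp
  ultimately show ?case
    by blast
qed

lemma distinct_choice_permuted:
  assumes \<sigma>: "bij_betw \<sigma> {1..n} {1..n}" and card: "\<forall>i\<in>{1..n}. i \<le> card (A (\<sigma> i))"
  shows "\<exists>qs. length qs = n \<and> distinct qs \<and> (\<forall>k<n. qs ! k \<in> A (k + 1))"
proof -
  obtain g where g: "inj_on g {1..n}" "\<forall>i\<in>{1..n}. g i \<in> A (\<sigma> i)"
    using inj_choice_card_ge[of n "A \<circ> \<sigma>"] card by auto
  define f where "f = g \<circ> inv_into {1..n} \<sigma>"
  have inv: "bij_betw (inv_into {1..n} \<sigma>) {1..n} {1..n}"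
    using \<sigma> by (rule bij_betw_inv_into)
  have "inj_on f {1..n}"
    unfolding f_def using inv g(1) by (metis bij_betw_def comp_inj_on)
  moreover have "f j \<in> A j" if "j \<in> {1..n}" for j
    using g(2) bij_betwE[OF inv] bij_betw_inv_into_right[OF \<sigma>] that
    unfolding f_def by (metis comp_apply)
  ultimately have "length (map f [1..<n + 1]) = n \<and> distinct (map f [1..<n + 1])
      \<and> (\<forall>k<n. map f [1..<n + 1] ! k \<in> A (k + 1))"
    by (auto simp: distinct_map atLeastLessThanSuc_atLeastAtMost simp del: upt_Suc)
  then show ?thesis
    by blast
qed

section \<open>Inserting a vertex in front of every block\<close>

lemma mult_add_div_cancel: "r < c \<Longrightarrow> (c * k + r) div c = (k::nat)"
  by (metis Nat.add_0_right add.commute div_less div_mult_self2 less_nat_zero_code)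

lemma mult_add_mod_cancel: "r < c \<Longrightarrow> (c * k + r) mod c = (r::nat)"
  by (metis mod_mult_self4 mod_less)

(* The p-th vertex of the sequence obtained from t by putting qs ! k in front of the k-th block
   (counting from 0) of h + 1 vertices: position (h + 2) k holds qs ! k, and the remaining
   positions run through t in order. *)
definition weave_nth :: "nat \<Rightarrow> 'a list \<Rightarrow> 'a list \<Rightarrow> nat \<Rightarrow> 'a" where
  "weave_nth h qs t p =
     (if p mod (h + 2) = 0 then qs ! (p div (h + 2)) else t ! (p - p div (h + 2) - 1))"

lemma weave_nth_block_offset:
  assumes "r < h + 2"
  shows "weave_nth h qs t ((h + 2) * k + r) = (if r = 0 then qs ! k else t ! ((h + 1) * k + r - 1))"
  using assms unfolding weave_nth_def mult_add_mod_cancel[OF assms] mult_add_div_cancel[OF assms]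
  by (simp add: algebra_simps)

lemma weave_nth_cases:
  obtains k r where "k = p div (h + 2)" "p = (h + 2) * k + r" "r < h + 2"
    "weave_nth h qs t p = (if r = 0 then qs ! k else t ! ((h + 1) * k + r - 1))"
proof -
  define k r where "k = p div (h + 2)" "r = p mod (h + 2)"
  then have p: "p = (h + 2) * k + r" "r < h + 2"
    by (simp_all only: mult_div_mod_eq) simp_all
  moreover have "weave_nth h qs t p = (if r = 0 then qs ! k else t ! ((h + 1) * k + r - 1))"
    unfolding p(1) by (rule weave_nth_block_offset[OF p(2)])
  ultimately show thesis
    using that \<open>k = _\<close> by blast
qed

lemma concat_blocks_eq_map_weave_nth:
  "(h + 1) * (n - 1) \<le> length t \<Longrightarrow>
    concat (map (\<lambda>i. qs ! i # block h t i) [0..<n])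
      = map (weave_nth h qs t) [0..<n + min (length t) ((h + 1) * n)]"
proof (induction n)
  case 0
  then show ?case
    by simp
next
  case (Suc n)
  let ?m = "min (length t - (h + 1) * n) (h + 1)"
  have full: "(h + 1) * n \<le> length t"
    using Suc.prems by simp
  have last: "map (weave_nth h qs t) [(h + 2) * n..<(h + 2) * n + Suc ?m] = qs ! n # block h t n"
  proof (rule nth_equalityI)
    fix r assume "r < length (map (weave_nth h qs t) [(h + 2) * n..<(h + 2) * n + Suc ?m])"
    then have "r < h + 2" "r \<le> ?m"
      by auto
    then show "map (weave_nth h qs t) [(h + 2) * n..<(h + 2) * n + Suc ?m] ! r
        = (qs ! n # block h t n) ! r"
      using weave_nth_block_offset[of r h qs t n] full
      by (cases r) (simp_all add: block_def nth_map_upt del: upt_Suc)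
  qed (simp add: block_def)
  have "(h + 1) * (n - 1) \<le> length t"
    using full by (meson diff_le_self le_trans mult_le_mono2)
  then have "concat (map (\<lambda>i. qs ! i # block h t i) [0..<n])
      = map (weave_nth h qs t) [0..<(h + 2) * n]"
    using Suc.IH full by (simp add: min_absorb2)
  then have "concat (map (\<lambda>i. qs ! i # block h t i) [0..<Suc n])
      = map (weave_nth h qs t) [0..<(h + 2) * n]
        @ map (weave_nth h qs t) [(h + 2) * n..<(h + 2) * n + Suc ?m]"
    using last by simp
  also have "\<dots> = map (weave_nth h qs t) [0..<(h + 2) * n + Suc ?m]"
    by (simp only: upt_add_eq_append[OF le0] map_append)
  also have "(h + 2) * n + Suc ?m = Suc n + min (length t) ((h + 1) * Suc n)"
    using full by (auto simp: min_def)
  finally show ?case .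
qed

lemma weave_nth_index_bounds:
  assumes "(h + 1) * (length qs - 1) \<le> length t" "length t \<le> (h + 1) * length qs"
    and "(h + 2) * k + r < length qs + length t" "r < h + 2"
  shows "k < length qs" and "0 < r \<Longrightarrow> (h + 1) * k + r - 1 < length t"
proof -
  have "(h + 2) * k < (h + 2) * length qs"
    using assms(2,3) by simp
  then show k: "k < length qs"
    by (simp only: mult_less_cancel1)
  show "(h + 1) * k + r - 1 < length t" if "0 < r"
  proof (cases "Suc k < length qs")
    case True
    then have "(h + 1) * Suc k \<le> (h + 1) * (length qs - 1)"
      by (intro mult_le_mono2) simp
    then show ?thesis
      using assms(1,4) that by simp
  next
    case False
    then have "length qs = Suc k"
      using k by simp
    then show ?thesis
      using assms(3) that by simp
  qed
qed

lemma inj_on_weave_nth: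
  assumes "distinct qs" "distinct t" "set qs \<inter> set t = {}"
    and len: "(h + 1) * (length qs - 1) \<le> length t" "length t \<le> (h + 1) * length qs"
  shows "inj_on (weave_nth h qs t) {0..<length qs + length t}"
proof (rule inj_onI)
  fix p p' assume "p \<in> {0..<length qs + length t}" "p' \<in> {0..<length qs + length t}"
    and eq: "weave_nth h qs t p = weave_nth h qs t p'"
  obtain k r where p: "p = (h + 2) * k + r" "r < h + 2"
      and wp: "weave_nth h qs t p = (if r = 0 then qs ! k else t ! ((h + 1) * k + r - 1))"
    by (rule weave_nth_cases)
  obtain k' r' where p': "p' = (h + 2) * k' + r'" "r' < h + 2"
      and wp': "weave_nth h qs t p' = (if r' = 0 then qs ! k' else t ! ((h + 1) * k' + r' - 1))"
    by (rule weave_nth_cases)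
  have b: "k < length qs" "0 < r \<Longrightarrow> (h + 1) * k + r - 1 < length t"
    using weave_nth_index_bounds[OF len] p \<open>p \<in> _\<close> by auto
  have b': "k' < length qs" "0 < r' \<Longrightarrow> (h + 1) * k' + r' - 1 < length t"
    using weave_nth_index_bounds[OF len] p' \<open>p' \<in> _\<close> by auto
  consider "r = 0" "r' = 0" | "r = 0" "r' > 0" | "r > 0" "r' = 0" | "r > 0" "r' > 0"
    by blast
  then show "p = p'"
  proof cases
    case 1
    then show ?thesis
      using eq wp wp' p p' b b' assms(1) by (simp add: nth_eq_iff_index_eq)
  next
    case 2
    then show ?thesis
      using eq wp wp' b b' assms(3) by (auto dest!: nth_mem)
  next
    case 3
    then show ?thesis
      using eq wp wp' b b' assms(3) by (auto dest!: nth_mem)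
  next
    case 4
    then have e: "(h + 1) * k + (r - 1) = (h + 1) * k' + (r' - 1)"
      using eq wp wp' b b' assms(2) by (simp add: nth_eq_iff_index_eq)
    have "r - 1 < h + 1" "r' - 1 < h + 1"
      using p(2) p'(2) by auto
    then have "k = k'" "r - 1 = r' - 1"
      using e by (metis mult_add_div_cancel, metis mult_add_mod_cancel)
    then show ?thesis
      using p p' 4 by simp
  qed
qed

lemma path_powerD:
  "path_power E h xs \<Longrightarrow> i < j \<Longrightarrow> j < length xs \<Longrightarrow> j - i \<le> h \<Longrightarrow> E (xs ! i) (xs ! j)"
  unfolding path_power_def by blast

lemma cycle_powerD:
  "cycle_power E h xs \<Longrightarrow> i < j \<Longrightarrow> j < length xs \<Longrightarrow> min (j - i) (length xs - (j - i)) \<le> h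
    \<Longrightarrow> E (xs ! i) (xs ! j)"
  unfolding cycle_power_def by blast

lemma cycle_power_imp_path_power: "cycle_power E h xs \<Longrightarrow> path_power E h xs"
  unfolding cycle_power_def path_power_def by (meson min.coboundedI1)

(* For k = 0 the truncated subtraction makes (h + 1) * (k - 1) = 0: qs ! 0 need only see block 0. *)
definition joins_adjacent_blocks :: "('a \<Rightarrow> 'a \<Rightarrow> bool) \<Rightarrow> nat \<Rightarrow> 'a list \<Rightarrow> 'a list \<Rightarrow> bool" where
  "joins_adjacent_blocks E h qs t \<longleftrightarrow>
     (\<forall>k < length qs. \<forall>a < length t.
        (h + 1) * (k - 1) \<le> a \<and> a < (h + 1) * (k + 1) \<longrightarrow> E (t ! a) (qs ! k))"

lemma joins_adjacent_blocksD:
  "joins_adjacent_blocks E h qs t \<Longrightarrow> k < length qs \<Longrightarrow> a < length t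
    \<Longrightarrow> (h + 1) * (k - 1) \<le> a \<Longrightarrow> a < (h + 1) * (k + 1) \<Longrightarrow> E (t ! a) (qs ! k)"
  unfolding joins_adjacent_blocks_def by blast

lemma weave_nth_adjacent:
  assumes E: "symp E" and t: "path_power E h t" and qs: "joins_adjacent_blocks E h qs t"
    and len: "(h + 1) * (length qs - 1) \<le> length t" "length t \<le> (h + 1) * length qs"
    and pp': "p < p'" "p' < length qs + length t" "p' - p \<le> h + 1"
  shows "E (weave_nth h qs t p) (weave_nth h qs t p')"
proof -
  obtain k r where "k = p div (h + 2)" and p: "p = (h + 2) * k + r" "r < h + 2"
      and wp: "weave_nth h qs t p = (if r = 0 then qs ! k else t ! ((h + 1) * k + r - 1))"
    by (rule weave_nth_cases)
  obtain k' r' where "k' = p' div (h + 2)" and p': "p' = (h + 2) * k' + r'" "r' < h + 2"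
      and wp': "weave_nth h qs t p' = (if r' = 0 then qs ! k' else t ! ((h + 1) * k' + r' - 1))"
    by (rule weave_nth_cases)
  have "(h + 2) * k + r < length qs + length t" "(h + 2) * k' + r' < length qs + length t"
    using p(1) p'(1) pp' by linarith+
  note b = weave_nth_index_bounds[OF len this(1) p(2)]
    and b' = weave_nth_index_bounds[OF len this(2) p'(2)]
  have "k' \<le> (p + (h + 2)) div (h + 2)"
    unfolding \<open>k' = _\<close> using pp' by (intro div_le_mono) simp
  also have "\<dots> = k + 1"
    unfolding \<open>k = _\<close> by (rule div_add_self2) simp
  finally have "k' \<le> k + 1" .
  moreover have "k \<le> k'"
    unfolding \<open>k = _\<close> \<open>k' = _\<close> using pp' by (simp add: div_le_mono)
  ultimately have kk: "k' = k \<or> k' = k + 1"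
    by linarith
  consider (qq) "r = 0" "r' = 0" | (qt) "r = 0" "0 < r'" | (tq) "0 < r" "r' = 0"
    | (tt) "0 < r" "0 < r'"
    by blast
  then show ?thesis
  proof cases
    case qq
    with kk p p' have "p' = p \<or> p' = p + (h + 2)"
      by auto
    with pp' show ?thesis
      by auto
  next
    case qt
    with kk p p' pp' have "k' = k"
      by auto
    have "(h + 1) * (k - 1) \<le> (h + 1) * k"
      by (intro mult_le_mono2) simp
    then have "E (t ! ((h + 1) * k + r' - 1)) (qs ! k)"
      using joins_adjacent_blocksD[OF qs b(1), of "(h + 1) * k + r' - 1"] b'(2) qt p'(2) \<open>k' = k\<close>
      by simp
    then show ?thesis
      using sympD[OF E] wp wp' qt \<open>k' = k\<close> by simp
  next
    case tq
    with kk p p' pp' have "k' = k + 1"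
      by auto
    then have "E (t ! ((h + 1) * k + r - 1)) (qs ! k')"
      using joins_adjacent_blocksD[OF qs b'(1) b(2)] tq p(2) by simp
    then show ?thesis
      using wp wp' tq by simp
  next
    case tt
    with kk p p' pp' have "(h + 1) * k + r - 1 < (h + 1) * k' + r' - 1"
      "(h + 1) * k' + r' - 1 - ((h + 1) * k + r - 1) \<le> h"
      by auto
    then show ?thesis
      using path_powerD[OF t _ b'(2)] wp wp' tt by simp
  qed
qed

lemma weave_nth_wrap_adjacent:
  assumes E: "symp E" and t: "cycle_power E h t" and len: "length t = (h + 1) * length qs"
    and wrap: "\<forall>a. (h + 1) * (length qs - 1) \<le> a \<and> a < length t \<longrightarrow> E (t ! a) (qs ! 0)"
    and pp': "p < p'" "p' < length qs + length t" "length qs + length t - (p' - p) \<le> h + 1"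
  shows "E (weave_nth h qs t p) (weave_nth h qs t p')"
proof -
  obtain m where m: "length qs = Suc m"
    using pp' len by (cases "length qs") auto
  obtain k r where p: "p = (h + 2) * k + r" "r < h + 2"
      and wp: "weave_nth h qs t p = (if r = 0 then qs ! k else t ! ((h + 1) * k + r - 1))"
    by (rule weave_nth_cases)
  obtain k' r' where p': "p' = (h + 2) * k' + r'" "r' < h + 2"
      and wp': "weave_nth h qs t p' = (if r' = 0 then qs ! k' else t ! ((h + 1) * k' + r' - 1))"
    by (rule weave_nth_cases)
  have "k = 0"
    using p pp' len m by (cases k) auto
  have "(h + 1) * (length qs - 1) \<le> (h + 1) * length qs"
    by (intro mult_le_mono2) simp
  then have "k' < length qs"
    using weave_nth_index_bounds(1)[of h qs t k' r'] p' pp' len by simp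
  moreover have "\<not> k' < m"
  proof
    assume "k' < m"
    then have "(h + 2) * Suc k' \<le> (h + 2) * m"
      by (intro mult_le_mono2) simp
    then show False
      using p' pp' len m by simp
  qed
  ultimately have "k' = m"
    using m by simp
  have "r < r'"
    using p p' pp' len m \<open>k = 0\<close> \<open>k' = m\<close> by simp
  show ?thesis
  proof (cases "r = 0")
    case True
    from \<open>r < r'\<close> have "E (t ! ((h + 1) * m + r' - 1)) (qs ! 0)"
      using p'(2) len m by (intro wrap[rule_format]) (simp; arith)
    then show ?thesis
      using sympD[OF E] wp wp' \<open>k = 0\<close> \<open>k' = m\<close> \<open>r < r'\<close> True by simp
  next
    case False
    have "E (t ! (r - 1)) (t ! ((h + 1) * m + r' - 1))"
      using cycle_powerD[OF t, of "r - 1" "(h + 1) * m + r' - 1"] p p' pp' len m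
        \<open>k = 0\<close> \<open>k' = m\<close> False
      by simp
    then show ?thesis
      using wp wp' \<open>k = 0\<close> \<open>k' = m\<close> \<open>r < r'\<close> False by simp
  qed
qed

lemma path_power_map_weave_nth:
  assumes E: "symp E" and t: "path_power E h t" and "distinct qs" "set qs \<inter> set t = {}"
    and qs: "joins_adjacent_blocks E h qs t"
    and len: "(h + 1) * (length qs - 1) \<le> length t" "length t \<le> (h + 1) * length qs"
  shows "path_power E (h + 1) (map (weave_nth h qs t) [0..<length qs + length t])"
proof -
  have "distinct t"
    using t by (simp add: path_power_def)
  then have "inj_on (weave_nth h qs t) {0..<length qs + length t}"
    using inj_on_weave_nth assms(3,4) len by blast
  then show ?thesis
    using weave_nth_adjacent[OF E t qs len] unfolding path_power_def by (simp add: distinct_map)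
qed

lemma cycle_power_map_weave_nth:
  assumes E: "symp E" and t: "cycle_power E h t" and "distinct qs" "set qs \<inter> set t = {}"
    and qs: "joins_adjacent_blocks E h qs t" and len: "length t = (h + 1) * length qs"
    and wrap: "\<forall>a. (h + 1) * (length qs - 1) \<le> a \<and> a < length t \<longrightarrow> E (t ! a) (qs ! 0)"
  shows "cycle_power E (h + 1) (map (weave_nth h qs t) [0..<length qs + length t])"
    (is "cycle_power E (h + 1) ?xs")
proof -
  have "(h + 1) * (length qs - 1) \<le> (h + 1) * length qs"
    by (intro mult_le_mono2) simp
  then have bounds: "(h + 1) * (length qs - 1) \<le> length t" "length t \<le> (h + 1) * length qs"
    using len by simp_all
  have "inj_on (weave_nth h qs t) {0..<length qs + length t}"
    using inj_on_weave_nth[OF assms(3) _ assms(4) bounds] t by (simp add: cycle_power_def)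
  then show ?thesis
    unfolding cycle_power_def
  proof (intro conjI allI impI)
    fix p p'
    assume pp': "p < p' \<and> p' < length ?xs \<and> min (p' - p) (length ?xs - (p' - p)) \<le> h + 1"
    show "E (?xs ! p) (?xs ! p')"
    proof (cases "p' - p \<le> h + 1")
      case True
      then show ?thesis
        using weave_nth_adjacent[OF E cycle_power_imp_path_power[OF t] qs bounds] pp' by simp
    next
      case False
      with pp' have "length qs + length t - (p' - p) \<le> h + 1"
        by (simp add: min_def split: if_splits)
      then show ?thesis
        using weave_nth_wrap_adjacent[OF E t len wrap, of p p'] pp' by simp
    qed
  qed (simp add: distinct_map)
qed

section \<open>The sets Q_i\<close>

lemma nth_mem_seg: "a \<le> x + 1 \<Longrightarrow> x + 1 \<le> b \<Longrightarrow> t ! x \<in> seg t a b"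
  unfolding seg_def by (rule CollectI, rule exI[of _ "x + 1"]) simp

lemma nth_mem_Qpath:
  assumes "length t = (h + 1) * l + h' - 1" "k \<le> l" "a < length t"
    and "(h + 1) * (k - 1) \<le> a" "a < (h + 1) * (k + 1)"
  shows "t ! a \<in> Qpath h h' l t (k + 1)"
proof -
  have k: "(h + 1) * (k - 1) = (h + 1) * k - (h + 1)"
    by (simp add: diff_mult_distrib2)
  consider "k = 0" | "0 < k" "k < l" | "0 < k" "k = l"
    using assms(2) by linarith
  then show ?thesis
  proof cases
    case 3
    then have "(h + 1) * 1 \<le> (h + 1) * l"
      by (intro mult_le_mono2) simp
    then show ?thesis
      using assms k 3 unfolding Qpath_def by (auto intro!: nth_mem_seg)
  qed (use assms k in \<open>auto simp: Qpath_def intro!: nth_mem_seg\<close>)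
qed

lemma nth_mem_Qcyc:
  assumes "k < l" "(h + 1) * (k - 1) \<le> a" "a < (h + 1) * (k + 1)"
  shows "t ! a \<in> Qcyc h l t (k + 1)"
  using assms unfolding Qcyc_def by (auto intro!: nth_mem_seg)

lemma nth_mem_Qcyc_last_block:
  assumes "(h + 1) * (l - 1) \<le> a" "a < (h + 1) * l"
  shows "t ! a \<in> Qcyc h l t 1"
proof -
  have "(h + 1) * (l - 1) = (h + 1) * l - (h + 1)"
    by (simp add: diff_mult_distrib2)
  then show ?thesis
    using assms unfolding Qcyc_def by (auto intro!: nth_mem_seg)
qed

lemma path_power_Suc_by_insertion:
  assumes E: "symp E" and h': "h' \<in> {1..h + 1}" and len: "length t = (h + 1) * l + h' - 1"
    and t: "path_power E h t" and W: "W \<inter> set t = {}" and \<sigma>: "bij_betw \<sigma> {1..l + 1} {1..l + 1}"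
    and card: "\<forall>i \<in> {1..l + 1}. i \<le> card (common_nbrs E W (Qpath h h' l t (\<sigma> i)))"
  shows "\<exists>qs. length qs = l + 1 \<and> distinct qs \<and> set qs \<subseteq> W \<and>
           path_power E (h + 1)
             (concat (map (\<lambda>i. qs ! i # block h t i) [0..<l]) @ (qs ! l # drop ((h + 1) * l) t))"
proof -
  obtain qs where qs: "length qs = l + 1" "distinct qs"
      "\<forall>k < l + 1. qs ! k \<in> common_nbrs E W (Qpath h h' l t (k + 1))"
    using distinct_choice_permuted[OF \<sigma> card] by blast
  have "set qs \<subseteq> W"
    using qs by (auto simp: common_nbrs_def in_set_conv_nth)
  have "joins_adjacent_blocks E h qs t"
    using qs nth_mem_Qpath[OF len] unfolding joins_adjacent_blocks_def common_nbrs_def by auto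
  moreover have len_qs: "(h + 1) * (length qs - 1) \<le> length t" "length t \<le> (h + 1) * length qs"
    using len h' qs(1) by auto
  ultimately have power: "path_power E (h + 1) (map (weave_nth h qs t) [0..<length qs + length t])"
    using path_power_map_weave_nth[OF E t qs(2)] W \<open>set qs \<subseteq> W\<close> by blast
  have "block h t l = drop ((h + 1) * l) t"
    using len h' by (auto simp: block_def)
  then have "concat (map (\<lambda>i. qs ! i # block h t i) [0..<l]) @ (qs ! l # drop ((h + 1) * l) t)
      = concat (map (\<lambda>i. qs ! i # block h t i) [0..<length qs])"
    using qs(1) by simp
  also have "\<dots> = map (weave_nth h qs t) [0..<length qs + length t]"
    using concat_blocks_eq_map_weave_nth[OF len_qs(1)] len_qs(2) by (simp add: min_absorb1)
  finally show ?thesis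
    using power qs \<open>set qs \<subseteq> W\<close> by auto
qed

lemma cycle_power_Suc_by_insertion:
  assumes E: "symp E" and l: "1 \<le> l" and len: "length t = (h + 1) * l"
    and t: "cycle_power E h t" and W: "W \<inter> set t = {}" and \<sigma>: "bij_betw \<sigma> {1..l} {1..l}"
    and card: "\<forall>i \<in> {1..l}. i \<le> card (common_nbrs E W (Qcyc h l t (\<sigma> i)))"
  shows "\<exists>qs. length qs = l \<and> distinct qs \<and> set qs \<subseteq> W \<and>
           cycle_power E (h + 1) (concat (map (\<lambda>i. qs ! i # block h t i) [0..<l]))"
proof -
  obtain qs where qs: "length qs = l" "distinct qs"
      "\<forall>k < l. qs ! k \<in> common_nbrs E W (Qcyc h l t (k + 1))"
    using distinct_choice_permuted[OF \<sigma> card] by blast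
  have "set qs \<subseteq> W"
    using qs by (auto simp: common_nbrs_def in_set_conv_nth)
  have "joins_adjacent_blocks E h qs t"
    unfolding joins_adjacent_blocks_def
  proof (intro allI impI)
    fix k a
    assume "k < length qs" "a < length t" "(h + 1) * (k - 1) \<le> a \<and> a < (h + 1) * (k + 1)"
    then show "E (t ! a) (qs ! k)"
      using qs nth_mem_Qcyc[of k l h a t] unfolding common_nbrs_def by auto
  qed
  moreover have "\<forall>a. (h + 1) * (length qs - 1) \<le> a \<and> a < length t \<longrightarrow> E (t ! a) (qs ! 0)"
  proof (intro allI impI)
    fix a assume "(h + 1) * (length qs - 1) \<le> a \<and> a < length t"
    then have "t ! a \<in> Qcyc h l t 1"
      using nth_mem_Qcyc_last_block[of h l a t] qs(1) len by auto
    then show "E (t ! a) (qs ! 0)"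
      using qs(3) l unfolding common_nbrs_def by auto
  qed
  ultimately have power: "cycle_power E (h + 1) (map (weave_nth h qs t) [0..<length qs + length t])"
    using cycle_power_map_weave_nth[OF E t qs(2)] W \<open>set qs \<subseteq> W\<close> len qs(1) by blast
  have "(h + 1) * (l - 1) \<le> (h + 1) * l"
    by (intro mult_le_mono2) simp
  then have "concat (map (\<lambda>i. qs ! i # block h t i) [0..<l])
      = map (weave_nth h qs t) [0..<length qs + length t]"
    using concat_blocks_eq_map_weave_nth[of h l t qs] len qs(1) by simp
  then show ?thesis
    using power qs \<open>set qs \<subseteq> W\<close> by auto
qed

theorem lemma7p1:
  fixes E :: "'a::finite \<Rightarrow> 'a \<Rightarrow> bool" and h l :: nat
  assumes G: "simple_graph E" and l: "l \<ge> 1"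
  shows
   "(\<forall>(h'::nat) (t::'a list) (W::'a set) (\<sigma>::nat \<Rightarrow> nat).
       h' \<in> {1..h + 1} \<and> length t = (h + 1) * l + h' - 1 \<and> path_power E h t \<and>
       W \<inter> set t = {} \<and> bij_betw \<sigma> {1..l + 1} {1..l + 1} \<and>
       (\<forall>i \<in> {1..l + 1}. card (common_nbrs E W (Qpath h h' l t (\<sigma> i))) \<ge> i)
     \<longrightarrow> (\<exists>qs. length qs = l + 1 \<and> distinct qs \<and> set qs \<subseteq> W \<and>
            path_power E (h + 1)
              (concat (map (\<lambda>i. qs ! i # block h t i) [0..<l]) @
               (qs ! l # drop ((h + 1) * l) t))))
   \<and>
   (\<forall>(t::'a list) (W::'a set) (\<sigma>::nat \<Rightarrow> nat).
       length t = (h + 1) * l \<and> cycle_power E h t \<and>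
       W \<inter> set t = {} \<and> bij_betw \<sigma> {1..l} {1..l} \<and>
       (\<forall>i \<in> {1..l}. card (common_nbrs E W (Qcyc h l t (\<sigma> i))) \<ge> i)
     \<longrightarrow> (\<exists>qs. length qs = l \<and> distinct qs \<and> set qs \<subseteq> W \<and>
            cycle_power E (h + 1) (concat (map (\<lambda>i. qs ! i # block h t i) [0..<l]))))"
proof -
  have E: "symp E"
    using G unfolding simple_graph_def symp_def by blast
  show ?thesis
    by (intro conjI allI impI; elim conjE;
        rule path_power_Suc_by_insertion[OF E] cycle_power_Suc_by_insertion[OF E l]; assumption)
qed

end
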